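(* Let $\xi_m>0$, $\lambda>0$, $\mu\in(0,\xi_m]$. (i) For any $u_0>0$ define $$u_{n+1}=\frac{\lambda}{\xi_m}u_n\Big(\sqrt{\xi_m^2+u_n^2}-\sqrt{\mu^2+u_n^2}+\mu\ln\frac{\mu+\sqrt{\mu^2+u_n^2}}{u_n}\Big),\quad n\ge0 .$$ Then $(u_n)$ is monotone and converges to a positive limit $u_*$, which is the unique positive solution $\Delta_0$ of the zero-temperature equation $\frac{\xi_m}{\lambda}=\sqrt{\xi_m^2+\Delta_0^2}-\sqrt{\mu^2+\Delta_0^2}+\mu\ln\frac{\mu+\sqrt{\mu^2+\Delta_0^2}}{\Delta_0}$. (ii) For $T>0$ and any $u_0>0$ define $$u_{n+1}=\frac{\lambda}{\xi_m}u_n\Big(2T\ln\frac{\cosh(\sqrt{\xi_m^2+u_n^2}/2T)}{\cosh(\sqrt{\mu^2+u_n^2}/2T)}+\mu\int_0^{\mu}\tanh\Big(\frac{\sqrt{\xi^2+u_n^2}}{2T}\Big)\frac{d\xi}{\sqrt{\xi^2+u_n^2}}\Big),\quad n\ge0 .$$ Then $(u_n)$ is monotone and converges to a limit $u_*\ge0$. If $0<T<T_c$, $u_*>0$ is the unique positive solution $\Delta$ of the finite-temperature gap equation $$\frac{\xi_m}{\lambda}=2T\ln\frac{\cosh(\sqrt{\xi_m^2+\Delta^2}/2T)}{\cosh(\sqrt{\mu^2+\Delta^2}/2T)}+\mu\int_0^{\mu}\tanh\Big(\frac{\sqrt{\xi^2+\Delta^2}}{2T}\Big)\frac{d\xi}{\sqrt{\xi^2+\Delta^2}};$$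 if $T\ge T_c$, then $u_*=0$ (and this gap equation has no positive solution). (iii) For any $\tau_0>0$ define $$\tau_{n+1}=\frac{\lambda}{\xi_m}\tau_n\Big(2\tau_n\ln\frac{\cosh(\xi_m/2\tau_n)}{\cosh(\mu/2\tau_n)}+\mu\int_0^{\mu}\frac1\xi\tanh\Big(\frac{\xi}{2\tau_n}\Big)d\xi\Big),\quad n\ge0 .$$ Then $(\tau_n)$ is monotone and converges to $T_c$. In each case where the limit is positive (case (i), case (ii) with $T<T_c$, case (iii)), the convergence is linear: $\lim_{n\to\infty}\frac{u_{n+1}-u_*}{u_n-u_*}$ (resp. with $\tau$) exists and lies in $(0,1)$ (when $u_n\neq u_*$ for all $n$).
   Context: $T_c=T_c(\mu,\lambda)>0$ denotes the unique positive solution $T$ of $\frac{\xi_m}{\lambda}=2T\ln\frac{\cosh(\xi_m/2T)}{\cosh(\mu/2T)}+\mu\int_0^{\mu}\frac1\xi\tanh\big(\frac{\xi}{2T}\big)d\xi$. *)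

theory Defs
  imports "HOL-Analysis.Analysis"
begin

definition F0 :: "real \<Rightarrow> real \<Rightarrow> real \<Rightarrow> real" where
  "F0 xm mu D = sqrt (xm\<^sup>2 + D\<^sup>2) - sqrt (mu\<^sup>2 + D\<^sup>2)
      + mu * ln ((mu + sqrt (mu\<^sup>2 + D\<^sup>2)) / D)"

definition FT :: "real \<Rightarrow> real \<Rightarrow> real \<Rightarrow> real \<Rightarrow> real" where
  "FT xm mu T D = 2 * T * ln (cosh (sqrt (xm\<^sup>2 + D\<^sup>2) / (2 * T)) / cosh (sqrt (mu\<^sup>2 + D\<^sup>2) / (2 * T)))
      + mu * integral {0..mu} (\<lambda>\<xi>. tanh (sqrt (\<xi>\<^sup>2 + D\<^sup>2) / (2 * T)) / sqrt (\<xi>\<^sup>2 + D\<^sup>2))"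

definition GT :: "real \<Rightarrow> real \<Rightarrow> real \<Rightarrow> real" where
  "GT xm mu T = 2 * T * ln (cosh (xm / (2 * T)) / cosh (mu / (2 * T)))
      + mu * integral {0..mu} (\<lambda>\<xi>. (1 / \<xi>) * tanh (\<xi> / (2 * T)))"

definition Tc :: "real \<Rightarrow> real \<Rightarrow> real \<Rightarrow> real" where
  "Tc xm lam mu = (THE T. T > 0 \<and> xm / lam = GT xm mu T)"

text \<open>Linear convergence of u to L (with u n \<noteq> L for all n).\<close>
definition lin_conv :: "(nat \<Rightarrow> real) \<Rightarrow> real \<Rightarrow> bool" where
  "lin_conv u L \<longleftrightarrow> (\<exists>r. 0 < r \<and> r < 1 \<and> ((\<lambda>n. (u (Suc n) - L) / (u n - L)) \<longlongrightarrow> r) sequentially)"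

end

theory Submission
  imports Defs
begin

text \<open>
  Each right-hand side F (of the zero-temperature equation in \<open>\<Delta>\<close>, of the finite-temperature
  equation in \<open>\<Delta>\<close>, and of the critical-temperature equation in T) is decreasing on \<open>(0,\<infinity>)\<close>
  while \<open>x F(x)\<close> is increasing, i.e. \<open>F' < 0 < F + x F'\<close>. Hence the iteration map
  \<open>g(x) = c x F(x)\<close> is increasing, its only positive fixed point is the root L of \<open>F = 1/c\<close>,
  and \<open>g(x) - x\<close> has the sign of \<open>L - x\<close>: the iterates are monotone, stay on one side of L
  and converge to it, linearly since \<open>g'(L) = 1 + c L F'(L) \<in> (0,1)\<close>. If instead
  \<open>F < 1/c\<close> everywhere, the iterates decrease to 0.

  The finite-temperature right-hand side is the integral over \<open>[0, \<xi>\<^sub>m]\<close> of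
  \<open>max(\<mu>,\<xi>) K\<^sub>T(sqrt(\<xi>\<^sup>2 + \<Delta>\<^sup>2))\<close> with \<open>K\<^sub>T(s) = tanh(s/2T)/s\<close>, and the critical one is its
  value at \<open>\<Delta> = 0\<close>. This reduces both sign conditions to pointwise facts about tanh, chiefly
  \<open>y (1 - tanh\<^sup>2 y) < tanh y\<close> for \<open>y > 0\<close>. As \<open>K\<^sub>T\<close> is decreasing, the finite-temperature
  right-hand side stays below the critical one, which exceeds \<open>\<xi>\<^sub>m/\<lambda>\<close> exactly when \<open>T < T\<^sub>c\<close>.
\<close>

section \<open>Iterating \<open>x \<mapsto> c x F(x)\<close>\<close>

lemma incseq_iterate:
  fixes g :: "real \<Rightarrow> real"
  assumes g: "mono_on S g" and u: "\<And>n. u n \<in> S" and rec: "\<And>n. u (Suc n) = g (u n)"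
    and "u 0 \<le> u 1"
  shows "incseq u"
proof -
  have "u n \<le> u (Suc n)" for n
  proof (induction n)
    case (Suc n)
    then show ?case using mono_onD[OF g u u Suc] by (simp add: rec)
  qed (use assms in simp)
  then show ?thesis by (rule incseq_SucI)
qed

lemma decseq_iterate:
  fixes g :: "real \<Rightarrow> real"
  assumes g: "mono_on S g" and u: "\<And>n. u n \<in> S" and rec: "\<And>n. u (Suc n) = g (u n)"
    and "u 1 \<le> u 0"
  shows "decseq u"
proof -
  have "u (Suc n) \<le> u n" for n
  proof (induction n)
    case (Suc n)
    then show ?case using mono_onD[OF g u u Suc] by (simp add: rec)
  qed (use assms in simp)
  then show ?thesis by (rule decseq_SucI)
qed

lemma iterate_le_fixpoint:
  fixes g :: "real \<Rightarrow> real"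
  assumes g: "mono_on S g" and u: "\<And>n. u n \<in> S" and rec: "\<And>n. u (Suc n) = g (u n)"
    and L: "L \<in> S" "g L = L" and "u 0 \<le> L"
  shows "u n \<le> L"
proof (induction n)
  case (Suc n)
  then show ?case using mono_onD[OF g u L(1) Suc] by (simp add: rec L(2))
qed (use assms in simp)

lemma iterate_ge_fixpoint:
  fixes g :: "real \<Rightarrow> real"
  assumes g: "mono_on S g" and u: "\<And>n. u n \<in> S" and rec: "\<And>n. u (Suc n) = g (u n)"
    and L: "L \<in> S" "g L = L" and "L \<le> u 0"
  shows "L \<le> u n"
proof (induction n)
  case (Suc n)
  then show ?case using mono_onD[OF g L(1) u Suc] by (simp add: rec L(2))
qed (use assms in simp)

lemma lin_conv_of_contraction_derivative:
  fixes g :: "real \<Rightarrow> real"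
  assumes der: "(g has_real_derivative d) (at L)" and d: "0 < d" "d < 1"
    and gL: "g L = L" and lim: "u \<longlonglongrightarrow> L" and ne: "\<forall>n. u n \<noteq> L"
    and rec: "\<And>n. u (Suc n) = g (u n)"
  shows "lin_conv u L"
proof -
  have "((\<lambda>x. (g x - g L) / (x - L)) \<longlongrightarrow> d) (at L)"
    using der by (simp add: has_field_derivative_iff)
  moreover have "filterlim u (at L) sequentially"
    using lim ne by (auto simp: filterlim_at intro!: always_eventually)
  ultimately have "((\<lambda>n. (g (u n) - g L) / (u n - L)) \<longlongrightarrow> d) sequentially"
    by (rule filterlim_compose)
  then show ?thesis
    unfolding lin_conv_def using d by (auto simp: rec gL)
qed

locale gap_rhs =
  fixes F F' :: "real \<Rightarrow> real"
  assumes has_deriv: "x > 0 \<Longrightarrow> (F has_real_derivative F' x) (at x)"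
    and deriv_neg: "x > 0 \<Longrightarrow> F' x < 0"
    and deriv_mult_pos: "x > 0 \<Longrightarrow> F x + x * F' x > 0"
begin

lemma pos: "x > 0 \<Longrightarrow> F x > 0"
  using deriv_mult_pos[of x] mult_pos_neg[of x "F' x"] deriv_neg[of x] by linarith

lemma isCont: "x > 0 \<Longrightarrow> isCont F x"
  using has_deriv DERIV_isCont by blast

lemma strict_antimono:
  assumes "0 < x" "x < y"
  shows "F y < F x"
proof (rule DERIV_neg_imp_decreasing[OF \<open>x < y\<close>])
  fix t assume "x \<le> t"
  then have "t > 0" using assms(1) by simp
  then show "\<exists>d. (F has_real_derivative d) (at t) \<and> d < 0"
    using has_deriv deriv_neg by blast
qed

lemma antimono: "0 < x \<Longrightarrow> x \<le> y \<Longrightarrow> F y \<le> F x"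
  using strict_antimono[of x y] by (cases "x = y") auto

lemma pos_eq_imp_eq: "0 < x \<Longrightarrow> 0 < y \<Longrightarrow> F x = F y \<Longrightarrow> x = y"
  using strict_antimono[of x y] strict_antimono[of y x] by (cases x y rule: linorder_cases) auto

lemma self_mult_strict_mono: "0 < x \<Longrightarrow> x < y \<Longrightarrow> x * F x < y * F y"
proof (rule DERIV_pos_imp_increasing[where f = "\<lambda>x. x * F x"])
  fix t assume "0 < x" "x \<le> t"
  then have t: "t > 0" by simp
  have "((\<lambda>x. x * F x) has_real_derivative F t + t * F' t) (at t)"
    by (rule derivative_eq_intros has_deriv[OF t] refl)+ simp
  then show "\<exists>d. ((\<lambda>x. x * F x) has_real_derivative d) (at t) \<and> 0 < d"
    using deriv_mult_pos[OF t] by blast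
qed

lemma mono_on_iteration_map: "c \<ge> 0 \<Longrightarrow> mono_on {0<..} (\<lambda>x. c * x * F x)"
  using self_mult_strict_mono by (force intro!: mono_onI mult_left_mono simp: le_less mult.assoc)

lemma root_exists:
  assumes "0 < a" "K \<le> F a" "0 < b" "F b \<le> K"
  shows "\<exists>L>0. F L = K"
proof -
  have "a \<le> b"
    using strict_antimono[of b a] assms by force
  then obtain L where "a \<le> L" "L \<le> b" "F L = K"
    using IVT2[of F b K a] assms isCont by force
  then show ?thesis using assms by (metis order.strict_trans2)
qed

lemma iterate_pos:
  assumes "c > 0" "u 0 > 0" "\<And>n. u (Suc n) = c * u n * F (u n)"
  shows "u n > 0"
  by (induction n) (use assms pos in auto)

lemma iterate_positive_limit:
  assumes c: "c > 0" and rec: "\<And>n. u (Suc n) = c * u n * F (u n)"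
    and l: "u \<longlonglongrightarrow> l" "l > 0"
  shows "F l = 1 / c"
proof -
  have "(\<lambda>n. c * u n * F (u n)) \<longlonglongrightarrow> c * l * F l"
    by (intro tendsto_intros l(1) isCont_tendsto_compose[OF isCont[OF l(2)]])
  moreover have "(\<lambda>n. c * u n * F (u n)) \<longlonglongrightarrow> l"
    using LIMSEQ_Suc[OF l(1)] by (simp add: rec)
  ultimately have "c * l * F l = l" by (rule LIMSEQ_unique)
  then show ?thesis using c l(2) by (simp add: field_simps)
qed

lemma iterate_converges_to_root:
  assumes c: "c > 0" and L: "L > 0" "F L = 1 / c"
    and u0: "u 0 > 0" and rec: "\<And>n. u (Suc n) = c * u n * F (u n)"
  shows "(incseq u \<or> decseq u) \<and> u \<longlonglongrightarrow> L"
proof -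
  define g where "g x = c * x * F x" for x
  have g: "mono_on {0<..} g" unfolding g_def using c by (intro mono_on_iteration_map) simp
  have gL: "g L = L" using L c by (simp add: g_def)
  have u: "u n \<in> {0<..}" for n using iterate_pos[OF c u0 rec] by simp
  have rec': "u (Suc n) = g (u n)" for n by (simp add: rec g_def)
  have L_limit: "l = L" if "u \<longlonglongrightarrow> l" "l > 0" for l
    using pos_eq_imp_eq[OF that(2) L(1)] iterate_positive_limit[OF c rec that] L(2) by simp
  show ?thesis
  proof (cases "u 0 \<le> L")
    case True
    have "1 \<le> c * F (u 0)" using antimono[OF u0 True] L c by (simp add: field_simps)
    then have "u 0 \<le> u 1" using u0 mult_left_mono[of 1 "c * F (u 0)" "u 0"] by (simp add: rec)
    then have inc: "incseq u" by (rule incseq_iterate[where u = u, OF g u rec'])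
    obtain l where l: "u \<longlonglongrightarrow> l" "\<forall>i. u i \<le> l"
      using incseq_convergent[OF inc] iterate_le_fixpoint[where u = u, OF g u rec' _ gL True] L by blast
    have "l > 0" using l(2) u0 by (meson less_le_trans)
    then show ?thesis using inc l(1) L_limit by blast
  next
    case False
    then have "L \<le> u 0" by simp
    then have "c * F (u 0) \<le> 1" using antimono[OF L(1)] L c by (simp add: field_simps)
    then have "u 1 \<le> u 0" using u0 mult_left_mono[of "c * F (u 0)" 1 "u 0"] by (simp add: rec)
    then have dec: "decseq u" by (rule decseq_iterate[where u = u, OF g u rec'])
    have ge: "\<forall>i. L \<le> u i" using iterate_ge_fixpoint[where u = u, OF g u rec' _ gL \<open>L \<le> u 0\<close>] L by simp
    obtain l where l: "u \<longlonglongrightarrow> l" using decseq_convergent[OF dec ge] by blast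
    have "L \<le> l" using LIMSEQ_le_const[OF l] ge by auto
    then have "l > 0" using L(1) by simp
    then show ?thesis using dec l L_limit by blast
  qed
qed

lemma iterate_lin_conv:
  assumes c: "c > 0" and L: "L > 0" "F L = 1 / c"
    and rec: "\<And>n. u (Suc n) = c * u n * F (u n)"
    and lim: "u \<longlonglongrightarrow> L" and ne: "\<forall>n. u n \<noteq> L"
  shows "lin_conv u L"
proof (rule lin_conv_of_contraction_derivative[OF _ _ _ _ lim ne rec])
  show "((\<lambda>x. c * x * F x) has_real_derivative 1 + c * (L * F' L)) (at L)"
    by (rule derivative_eq_intros has_deriv[OF L(1)] refl)+ (use L c in \<open>simp add: algebra_simps\<close>)
  have "c * (L * F' L) < 0" using c L deriv_neg[OF L(1)] by (simp add: mult_pos_neg)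
  moreover have "1 + c * (L * F' L) = c * (F L + L * F' L)" using L c by (simp add: algebra_simps)
  ultimately show "0 < 1 + c * (L * F' L)" "1 + c * (L * F' L) < 1"
    using c deriv_mult_pos[OF L(1)] by auto
  show "c * L * F L = L" using L c by simp
qed

lemma iterate_converges_linearly:
  assumes "c > 0" "L > 0" "F L = 1 / c" "u 0 > 0" "\<And>n. u (Suc n) = c * u n * F (u n)"
  shows "(incseq u \<or> decseq u) \<and> u \<longlonglongrightarrow> L \<and> ((\<forall>n. u n \<noteq> L) \<longrightarrow> lin_conv u L)"
  using iterate_converges_to_root[OF assms] iterate_lin_conv[where u = u, OF assms(1-3,5)] by blast

lemma iterate_tends_to_zero:
  assumes c: "c > 0" and small: "\<And>x. x > 0 \<Longrightarrow> F x < 1 / c"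
    and u0: "u 0 > 0" and rec: "\<And>n. u (Suc n) = c * u n * F (u n)"
  shows "decseq u \<and> u \<longlonglongrightarrow> 0"
proof -
  have u: "u n > 0" for n by (rule iterate_pos[OF c u0 rec])
  have "u (Suc n) \<le> u n" for n
  proof -
    have "c * F (u n) < 1" using small[OF u[of n]] c by (simp add: field_simps)
    then show ?thesis
      using mult_left_mono[of "c * F (u n)" 1 "u n"] u[of n] by (simp add: rec mult_ac)
  qed
  then have dec: "decseq u" by (rule decseq_SucI)
  obtain l where l: "u \<longlonglongrightarrow> l"
    using decseq_convergent[OF dec, of 0] u by (meson less_imp_le)
  have "l \<ge> 0" using LIMSEQ_le_const[OF l] u by (meson less_imp_le)
  moreover have "\<not> l > 0"
    using iterate_positive_limit[OF c rec l] small[of l] by auto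
  ultimately show ?thesis using dec l by auto
qed

end

section \<open>Hyperbolic tangent\<close>

lemma tanh_real_has_real_derivative: "(tanh has_real_derivative 1 - tanh y ^ 2) (at (y::real) within A)"
  unfolding tanh_def
  by (auto intro!: derivative_eq_intros simp: power2_eq_square field_split_simps cosh_square_eq)

lemma tanh_less_self:
  fixes y :: real
  assumes "0 < y"
  shows "tanh y < y"
proof -
  have "0 - tanh 0 < y - tanh y"
  proof (rule DERIV_pos_imp_increasing_open[where f = "\<lambda>y. y - tanh y", OF assms])
    fix x :: real assume "0 < x"
    have "((\<lambda>y. y - tanh y) has_real_derivative tanh x ^ 2) (at x)"
      by (auto intro!: derivative_eq_intros)
    moreover have "0 < tanh x ^ 2" using \<open>0 < x\<close> by simp
    ultimately show "\<exists>d. ((\<lambda>y. y - tanh y) has_real_derivative d) (at x) \<and> 0 < d"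
      by (intro exI conjI)
  qed (intro continuous_intros; simp)
  then show ?thesis by simp
qed

lemma tanh_le_self: "0 \<le> y \<Longrightarrow> tanh y \<le> (y::real)"
  using tanh_less_self[of y] by (cases "y = 0") auto

lemma tanh_sq_less_1: "tanh (y::real) ^ 2 < 1"
  using tanh_real_bounds[of y] by (simp add: abs_square_less_1 abs_less_iff)

lemma mult_one_minus_tanh_sq_less_tanh:
  fixes y :: real
  assumes y: "0 < y"
  shows "y * (1 - tanh y ^ 2) < tanh y"
proof -
  let ?f = "\<lambda>y::real. tanh y - y * (1 - tanh y ^ 2)"
  have "?f 0 < ?f y"
  proof (rule DERIV_pos_imp_increasing_open[where f = ?f, OF y])
    fix x :: real assume x: "0 < x" "x < y"
    have "(?f has_real_derivative 2 * x * tanh x * (1 - tanh x ^ 2)) (at x)"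
      by (auto intro!: derivative_eq_intros simp: algebra_simps power2_eq_square)
    moreover have "2 * x * tanh x * (1 - tanh x ^ 2) > 0"
      using x tanh_sq_less_1[of x] by simp
    ultimately show "\<exists>d. (?f has_real_derivative d) (at x) \<and> d > 0"
      by (intro exI conjI)
  qed (intro continuous_intros; simp)
  then show ?thesis by simp
qed

lemma has_real_derivative_sqrt_sum_sq:
  "x\<^sup>2 + a\<^sup>2 > 0 \<Longrightarrow> ((\<lambda>x. sqrt (x\<^sup>2 + a\<^sup>2)) has_real_derivative x / sqrt (x\<^sup>2 + a\<^sup>2)) (at x within A)"
  by (auto intro!: derivative_eq_intros simp: power2_eq_square) (simp add: field_simps)

section \<open>Zero temperature\<close>

lemma div_sqrt_sq_plus_1_less_arsinh:
  fixes x :: real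
  assumes "0 < x"
  shows "x / sqrt (x\<^sup>2 + 1) < arsinh x"
  using tanh_less_self[of "arsinh x"] assms by (simp add: tanh_def cosh_arsinh_real)

lemma sqrt_div_sq_plus_1:
  fixes a D :: real
  assumes "D > 0"
  shows "sqrt ((a / D)\<^sup>2 + 1) = sqrt (a\<^sup>2 + D\<^sup>2) / D"
proof -
  have "(a / D)\<^sup>2 + 1 = (a\<^sup>2 + D\<^sup>2) / D\<^sup>2" using assms by (simp add: field_simps)
  then show ?thesis using assms by (simp add: real_sqrt_divide)
qed

lemma F0_eq_arsinh:
  assumes "D > 0"
  shows "F0 xm mu D = sqrt (xm\<^sup>2 + D\<^sup>2) - sqrt (mu\<^sup>2 + D\<^sup>2) + mu * arsinh (mu / D)"
  using assms by (simp add: F0_def arsinh_real_def sqrt_div_sq_plus_1 add_divide_distrib)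

definition F0_deriv :: "real \<Rightarrow> real \<Rightarrow> real \<Rightarrow> real" where
  "F0_deriv xm mu D = D / sqrt (xm\<^sup>2 + D\<^sup>2) - D / sqrt (mu\<^sup>2 + D\<^sup>2) - mu\<^sup>2 / (D * sqrt (mu\<^sup>2 + D\<^sup>2))"

lemma F0_has_derivative:
  assumes D: "D > 0"
  shows "(F0 xm mu has_real_derivative F0_deriv xm mu D) (at D)"
proof -
  define sm where "sm = sqrt (mu\<^sup>2 + D\<^sup>2)"
  have sm: "sm > 0" using D by (simp add: sm_def add_nonneg_pos)
  have sq: "((\<lambda>D. sqrt (c\<^sup>2 + D\<^sup>2)) has_real_derivative D / sqrt (c\<^sup>2 + D\<^sup>2)) (at D)" for c
    using has_real_derivative_sqrt_sum_sq[of D c UNIV] D by (simp add: add.commute add_pos_nonneg)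
  have arsinh: "((\<lambda>D. arsinh (mu / D)) has_real_derivative 1 / sqrt ((mu / D)\<^sup>2 + 1) * (- mu / D\<^sup>2)) (at D)"
    using D by (intro DERIV_chain2[OF arsinh_real_has_field_derivative])
       (auto intro!: derivative_eq_intros simp: power2_eq_square)
  have eq: "1 / sqrt ((mu / D)\<^sup>2 + 1) * (- mu / D\<^sup>2) = - mu / (D * sm)"
    unfolding sqrt_div_sq_plus_1[OF D] sm_def[symmetric]
    using D sm by (simp add: field_simps power2_eq_square)
  have "((\<lambda>D. mu * arsinh (mu / D)) has_real_derivative mu * (- mu / (D * sm))) (at D)"
    using DERIV_cmult[OF arsinh[unfolded eq]] .
  from DERIV_add[OF DERIV_diff[OF sq sq] this]
  have "((\<lambda>D. sqrt (xm\<^sup>2 + D\<^sup>2) - sqrt (mu\<^sup>2 + D\<^sup>2) + mu * arsinh (mu / D)) has_real_derivative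
          F0_deriv xm mu D) (at D)"
    by (simp add: F0_deriv_def sm_def power2_eq_square)
  then show ?thesis
    by (rule has_field_derivative_transform_within_open[where S = "{0<..}"])
       (use D F0_eq_arsinh in auto)
qed

lemma arsinh_le_self:
  fixes x :: real
  assumes "0 \<le> x"
  shows "arsinh x \<le> x"
proof -
  have "x \<le> sinh x"
    using real_le_x_sinh[OF assms] by (simp add: sinh_field_def exp_minus)
  then show ?thesis using sinh_real_le_iff[of "arsinh x" x] by simp
qed

lemma gap_rhs_F0:
  assumes mu: "0 < mu" "mu \<le> xm"
  shows "gap_rhs (F0 xm mu) (F0_deriv xm mu)"
proof
  fix D :: real assume D: "D > 0"
  show "(F0 xm mu has_real_derivative F0_deriv xm mu D) (at D)"
    by (rule F0_has_derivative[OF D])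
  define sx where "sx = sqrt (xm\<^sup>2 + D\<^sup>2)"
  define sm where "sm = sqrt (mu\<^sup>2 + D\<^sup>2)"
  have Dsm: "D \<le> sm" unfolding sm_def by (rule real_le_rsqrt) simp
  have smsx: "sm \<le> sx" unfolding sm_def sx_def using mu by (intro real_sqrt_le_mono) (simp add: power_mono)
  have sm: "sm > 0" using D Dsm by simp
  have "D / sx \<le> D / sm" using smsx sm D by (intro divide_left_mono) auto
  moreover have "mu\<^sup>2 / (D * sm) > 0" using mu D sm by simp
  ultimately show "F0_deriv xm mu D < 0"
    unfolding F0_deriv_def sx_def[symmetric] sm_def[symmetric] by linarith
  have "sm + D\<^sup>2 / sm \<le> sx + D\<^sup>2 / sx"
  proof -
    have "D\<^sup>2 \<le> sm * sx" using Dsm smsx D by (metis mult_mono power2_eq_square less_imp_le order_trans)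
    then have "D\<^sup>2 * (sx - sm) \<le> sm * sx * (sx - sm)" using smsx by (intro mult_right_mono) auto
    then show ?thesis using sm smsx by (simp add: field_simps algebra_simps)
  qed
  moreover have "mu / sm < arsinh (mu / D)"
    using div_sqrt_sq_plus_1_less_arsinh[of "mu / D"] mu D
    by (simp add: sqrt_div_sq_plus_1 sm_def)
  moreover have "F0 xm mu D + D * F0_deriv xm mu D
      = (sx + D\<^sup>2 / sx) - (sm + D\<^sup>2 / sm) + mu * (arsinh (mu / D) - mu / sm)"
  proof -
    define A where "A = arsinh (mu / D)"
    have "sx - sm + mu * A + D * (D / sx - D / sm - mu\<^sup>2 / (D * sm))
        = (sx + D\<^sup>2 / sx) - (sm + D\<^sup>2 / sm) + mu * (A - mu / sm)"
      using D sm by (simp add: field_simps power2_eq_square)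
    then show ?thesis
      unfolding F0_eq_arsinh[OF D] F0_deriv_def sx_def[symmetric] sm_def[symmetric] A_def .
  qed
  ultimately show "0 < F0 xm mu D + D * F0_deriv xm mu D"
    using mult_strict_left_mono[of "mu / sm" "arsinh (mu / D)" mu] mu by (simp add: algebra_simps)
qed

lemma F0_ge:
  assumes D: "D > 0" and mu: "0 < mu" "mu \<le> xm"
  shows "mu * ln (mu / D) \<le> F0 xm mu D"
proof -
  have "sqrt (mu\<^sup>2 + D\<^sup>2) \<le> sqrt (xm\<^sup>2 + D\<^sup>2)" using mu by (intro real_sqrt_le_mono) (simp add: power_mono)
  moreover have "ln (mu / D) \<le> arsinh (mu / D)"
    unfolding arsinh_real_def using mu D arsinh_real_aux[of "mu / D"] by (subst ln_le_cancel_iff) auto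
  then have "mu * ln (mu / D) \<le> mu * arsinh (mu / D)" using mu by (intro mult_left_mono) auto
  ultimately show ?thesis unfolding F0_eq_arsinh[OF D] by linarith
qed

lemma F0_le:
  assumes D: "D > 0" and mu: "0 < mu" "mu \<le> xm"
  shows "F0 xm mu D \<le> 2 * xm\<^sup>2 / D"
proof -
  define sx where "sx = sqrt (xm\<^sup>2 + D\<^sup>2)"
  define sm where "sm = sqrt (mu\<^sup>2 + D\<^sup>2)"
  have D_le: "D \<le> sm" "D \<le> sx" unfolding sm_def sx_def by (auto intro: real_le_rsqrt)
  have "(sx - sm) * (sx + sm) \<le> xm\<^sup>2"
    unfolding sx_def sm_def by (simp add: algebra_simps power2_eq_square)
  then have "sx - sm \<le> xm\<^sup>2 / (sx + sm)" using D D_le by (simp add: field_simps)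
  also have "\<dots> \<le> xm\<^sup>2 / D" using D D_le by (intro divide_left_mono) auto
  finally have "sx - sm \<le> xm\<^sup>2 / D" .
  moreover have "mu * arsinh (mu / D) \<le> mu * (mu / D)"
    using mu D by (intro mult_left_mono arsinh_le_self) auto
  moreover have "mu * (mu / D) \<le> xm\<^sup>2 / D"
  proof -
    have "mu\<^sup>2 \<le> xm\<^sup>2" using mu by (intro power_mono) auto
    then show ?thesis using D by (simp add: power2_eq_square divide_right_mono)
  qed
  ultimately show ?thesis
    unfolding F0_eq_arsinh[OF D] sx_def[symmetric] sm_def[symmetric] by simp
qed

lemma F0_root_exists:
  assumes K: "K > 0" and mu: "0 < mu" "mu \<le> xm"
  shows "\<exists>L>0. F0 xm mu L = K"
proof -
  interpret gap_rhs "F0 xm mu" "F0_deriv xm mu" by (rule gap_rhs_F0[OF mu])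
  have "K \<le> F0 xm mu (mu * exp (- K / mu))"
    using F0_ge[of "mu * exp (- K / mu)" mu xm] mu by (simp add: ln_div)
  moreover have "F0 xm mu (2 * xm\<^sup>2 / K) \<le> K"
    using F0_le[of "2 * xm\<^sup>2 / K" mu xm] K mu by simp
  ultimately show ?thesis using K mu by (intro root_exists) auto
qed

lemma gap_iteration_zero_temperature:
  assumes xm: "xm > 0" and lam: "lam > 0" and mu: "0 < mu" "mu \<le> xm"
    and u0: "u 0 > 0" and rec: "\<And>n. u (Suc n) = lam / xm * u n * F0 xm mu (u n)"
  shows "(incseq u \<or> decseq u) \<and>
    (\<exists>L. u \<longlonglongrightarrow> L \<and> L > 0 \<and> (\<forall>D>0. xm / lam = F0 xm mu D \<longleftrightarrow> D = L) \<and>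
         ((\<forall>n. u n \<noteq> L) \<longrightarrow> lin_conv u L))"
proof -
  interpret gap_rhs "F0 xm mu" "F0_deriv xm mu" by (rule gap_rhs_F0[OF mu])
  obtain L where L: "L > 0" "F0 xm mu L = xm / lam"
    using F0_root_exists[OF _ mu, of "xm / lam"] xm lam by auto
  have "\<forall>D>0. xm / lam = F0 xm mu D \<longleftrightarrow> D = L" using pos_eq_imp_eq L by auto
  moreover have "(incseq u \<or> decseq u) \<and> u \<longlonglongrightarrow> L \<and> ((\<forall>n. u n \<noteq> L) \<longrightarrow> lin_conv u L)"
    by (rule iterate_converges_linearly[where c = "lam / xm"]) (use L xm lam u0 rec in auto)
  ultimately show ?thesis using L by blast
qed

section \<open>The kernel \<open>tanh(s/2T)/s\<close>\<close>

definition tanhc :: "real \<Rightarrow> real" where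
  "tanhc y = (if y = 0 then 1 else tanh y / y)"

lemma tanhc_has_real_derivative:
  assumes "y \<noteq> 0"
  shows "(tanhc has_real_derivative (y * (1 - tanh y ^ 2) - tanh y) / y ^ 2) (at y)"
proof -
  have "((\<lambda>y. tanh y / y) has_real_derivative (y * (1 - tanh y ^ 2) - tanh y) / y ^ 2) (at y)"
    using assms by (auto intro!: derivative_eq_intros simp: power2_eq_square algebra_simps)
  then show ?thesis
    by (rule has_field_derivative_transform_within_open[where S = "-{0}"])
       (use assms in \<open>auto simp: tanhc_def\<close>)
qed

lemma isCont_tanhc: "isCont tanhc y"
proof (cases "y = 0")
  case True
  have "((\<lambda>h. (tanh (0 + h) - tanh 0) / h) \<longlongrightarrow> 1 - tanh (0::real) ^ 2) (at 0)"
    using tanh_real_has_real_derivative[of 0 UNIV] by (simp only: DERIV_def)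
  then have "((\<lambda>h. tanh h / h) \<longlongrightarrow> tanhc 0) (at 0)" by (simp add: tanhc_def)
  then have "(tanhc \<longlongrightarrow> tanhc 0) (at 0)"
    by (rule Lim_transform_eventually) (auto simp: tanhc_def eventually_at_filter)
  then show ?thesis using True by (simp add: isCont_def)
next
  case False
  then show ?thesis using tanhc_has_real_derivative DERIV_isCont by blast
qed

lemma tanhc_pos: "tanhc y > 0"
  by (auto simp: tanhc_def divide_pos_pos divide_neg_neg linorder_neq_iff)

lemma tanhc_le_1: "0 \<le> y \<Longrightarrow> tanhc y \<le> 1"
  using tanh_le_self[of y] by (auto simp: tanhc_def)

lemma one_minus_tanh_sq_le_tanhc:
  assumes "0 \<le> y"
  shows "1 - tanh y ^ 2 \<le> tanhc y" and "0 < y \<Longrightarrow> 1 - tanh y ^ 2 < tanhc y"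
proof -
  show strict: "1 - tanh y ^ 2 < tanhc y" if "0 < y"
    using mult_one_minus_tanh_sq_less_tanh[OF that] that by (simp add: tanhc_def field_simps)
  show "1 - tanh y ^ 2 \<le> tanhc y"
    using strict assms by (cases "y = 0") (auto simp: tanhc_def)
qed

lemma tanhc_strict_antimono:
  assumes "0 \<le> a" "a < b"
  shows "tanhc b < tanhc a"
proof (rule DERIV_neg_imp_decreasing_open[OF assms(2)])
  fix x assume "a < x" "x < b"
  then have x: "x > 0" using assms by auto
  have "(x * (1 - tanh x ^ 2) - tanh x) / x ^ 2 < 0"
    using mult_one_minus_tanh_sq_less_tanh[OF x] x by (simp add: divide_neg_pos)
  then show "\<exists>d. (tanhc has_real_derivative d) (at x) \<and> d < 0"
    using tanhc_has_real_derivative[of x] x by auto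
qed (simp add: continuous_at_imp_continuous_on isCont_tanhc)

lemma tanhc_diff_le:
  assumes "0 \<le> a" "a \<le> b"
  shows "tanhc a - tanhc b \<le> b - a"
proof -
  have "tanhc a + a \<le> tanhc b + b"
  proof (rule DERIV_nonneg_imp_increasing_open[where f = "\<lambda>y. tanhc y + y", OF assms(2)])
    fix x assume "a < x" "x < b"
    then have x: "x > 0" using assms by auto
    have "tanh x - x * (1 - tanh x ^ 2) \<le> x * tanh x ^ 2"
      using tanh_le_self[of x] x by (simp add: algebra_simps)
    also have "\<dots> \<le> x * x"
      using tanh_real_bounds[of x] tanh_le_self[of x] x
      by (intro mult_left_mono) (auto simp: power2_eq_square intro: order.trans[OF mult_left_le_one_le])
    finally have "0 \<le> (x * (1 - tanh x ^ 2) - tanh x) / x ^ 2 + 1"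
      using x by (simp add: field_simps power2_eq_square)
    moreover have "((\<lambda>y. tanhc y + y) has_real_derivative (x * (1 - tanh x ^ 2) - tanh x) / x ^ 2 + 1) (at x)"
      using x by (auto intro!: derivative_eq_intros tanhc_has_real_derivative)
    ultimately show "\<exists>d. ((\<lambda>y. tanhc y + y) has_real_derivative d) (at x) \<and> 0 \<le> d"
      by (intro exI conjI)
  qed (simp add: continuous_at_imp_continuous_on isCont_tanhc continuous_intros)
  then show ?thesis by simp
qed

definition tanh_kernel :: "real \<Rightarrow> real \<Rightarrow> real" where
  "tanh_kernel T s = tanhc (s / (2 * T)) / (2 * T)"

lemma tanh_kernel_eq:
  assumes "s \<noteq> 0"
  shows "tanh_kernel T s = tanh (s / (2 * T)) / s"
proof (cases "T = 0")
  case False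
  then show ?thesis using assms by (simp add: tanh_kernel_def tanhc_def)
qed (simp add: tanh_kernel_def tanhc_def)

lemma tanh_kernel_0: "tanh_kernel T 0 = 1 / (2 * T)"
  by (simp add: tanh_kernel_def tanhc_def)

lemma continuous_on_tanh_kernel [continuous_intros]:
  assumes "continuous_on A f" "T \<noteq> 0"
  shows "continuous_on A (\<lambda>x. tanh_kernel T (f x))"
  unfolding tanh_kernel_def using assms
  by (intro continuous_intros continuous_on_compose2[OF continuous_at_imp_continuous_on[of UNIV tanhc]])
     (auto simp: isCont_tanhc)

lemma tanh_kernel_pos: "T > 0 \<Longrightarrow> tanh_kernel T s > 0"
  using tanhc_pos by (simp add: tanh_kernel_def)

lemma tanh_kernel_le: "T > 0 \<Longrightarrow> 0 \<le> s \<Longrightarrow> tanh_kernel T s \<le> 1 / (2 * T)"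
  using tanhc_le_1[of "s / (2 * T)"] by (simp add: tanh_kernel_def divide_right_mono)

lemma tanh_kernel_antimono:
  assumes "T > 0" "0 \<le> a" "a \<le> b"
  shows "tanh_kernel T b \<le> tanh_kernel T a"
  using tanhc_strict_antimono[of "a / (2 * T)" "b / (2 * T)"] assms
  by (cases "a = b") (auto simp: tanh_kernel_def divide_right_mono divide_strict_right_mono)

lemma tanh_kernel_diff_le:
  assumes T: "T > 0" and ab: "0 \<le> a" "a \<le> b"
  shows "tanh_kernel T a - tanh_kernel T b \<le> (b - a) / (4 * T ^ 2)"
proof -
  have "tanhc (a / (2 * T)) - tanhc (b / (2 * T)) \<le> b / (2 * T) - a / (2 * T)"
    using T ab by (intro tanhc_diff_le) (auto simp: divide_right_mono)
  then have "(tanhc (a / (2 * T)) - tanhc (b / (2 * T))) / (2 * T) \<le> (b / (2 * T) - a / (2 * T)) / (2 * T)"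
    using T by (intro divide_right_mono) auto
  moreover have "(b / (2 * T) - a / (2 * T)) / (2 * T) = (b - a) / (4 * T ^ 2)"
    using T by (simp add: field_simps power2_eq_square)
  ultimately show ?thesis by (simp add: tanh_kernel_def diff_divide_distrib)
qed

definition tanh_kernel_deriv :: "real \<Rightarrow> real \<Rightarrow> real" where
  "tanh_kernel_deriv T s =
     (s / (2 * T) * (1 - tanh (s / (2 * T)) ^ 2) - tanh (s / (2 * T))) / s ^ 2"

lemma gap_rhs_tanh_kernel:
  assumes T: "T > 0"
  shows "gap_rhs (tanh_kernel T) (tanh_kernel_deriv T)"
proof
  fix s :: real assume s: "s > 0"
  define y where "y = s / (2 * T)"
  define t where "t = tanh y"
  have y: "y > 0" "s = 2 * T * y" using s T by (auto simp: y_def)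
  have der: "((\<lambda>s. tanhc (s / (2 * T)) / (2 * T)) has_real_derivative
          (y * (1 - tanh y ^ 2) - tanh y) / y ^ 2 * (1 / (2 * T)) / (2 * T)) (at s)"
    unfolding y_def using s T
    by (intro DERIV_cdivide DERIV_chain2[OF tanhc_has_real_derivative]) (auto intro!: derivative_eq_intros)
  have eq: "(y * (1 - t ^ 2) - t) / y ^ 2 * (1 / (2 * T)) / (2 * T) = (y * (1 - t ^ 2) - t) / s ^ 2"
    using y T by (simp add: field_simps power2_eq_square)
  show "(tanh_kernel T has_real_derivative tanh_kernel_deriv T s) (at s)"
    using der[unfolded eq[unfolded t_def]]
    unfolding tanh_kernel_deriv_def tanh_kernel_def[abs_def] y_def[symmetric] .
  have "y * (1 - t ^ 2) - t < 0"
    using mult_one_minus_tanh_sq_less_tanh[OF y(1)] by (simp add: t_def)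
  then show "tanh_kernel_deriv T s < 0"
    using s by (simp add: tanh_kernel_deriv_def y_def[symmetric] t_def[symmetric] divide_neg_pos)
  have "tanh_kernel T s + s * tanh_kernel_deriv T s = (1 - t ^ 2) / (2 * T)"
    using y T
    by (simp add: tanh_kernel_eq tanh_kernel_deriv_def y_def[symmetric] t_def[symmetric]
        field_simps power2_eq_square)
  then show "tanh_kernel T s + s * tanh_kernel_deriv T s > 0"
    using T tanh_sq_less_1[of y] by (simp add: t_def)
qed

lemma tanh_kernel_plus_scaled_deriv_pos:
  assumes T: "T > 0" and D: "0 < D" "D \<le> r"
  shows "0 < tanh_kernel T r + D * (D / r) * tanh_kernel_deriv T r"
proof -
  interpret gap_rhs "tanh_kernel T" "tanh_kernel_deriv T" by (rule gap_rhs_tanh_kernel[OF T])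
  have r: "r > 0" using D by simp
  have "r * tanh_kernel_deriv T r \<le> D * (D / r) * tanh_kernel_deriv T r"
  proof (rule mult_right_mono_neg)
    have "D * D \<le> r * r" using D by (intro mult_mono) auto
    then show "D * (D / r) \<le> r" using r by (simp add: field_simps)
  qed (use deriv_neg[OF r] in \<open>simp add: less_imp_le\<close>)
  then show ?thesis using deriv_mult_pos[OF r] by linarith
qed

definition tanh_kernel_dT :: "real \<Rightarrow> real \<Rightarrow> real" where
  "tanh_kernel_dT T s = - (1 - tanh (s / (2 * T)) ^ 2) / (2 * T ^ 2)"

lemma tanh_kernel_has_derivative_T:
  assumes T: "T > 0"
  shows "((\<lambda>T. tanh_kernel T s) has_real_derivative tanh_kernel_dT T s) (at T within A)"
proof (cases "s = 0")
  case True
  have "((\<lambda>T. 1 / (2 * T)) has_real_derivative - 1 / (2 * T ^ 2)) (at T within A)"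
    using T by (auto intro!: derivative_eq_intros simp: power2_eq_square)
  then show ?thesis using True by (simp add: tanh_kernel_0 tanh_kernel_dT_def)
next
  case False
  define t where "t = tanh (s / (2 * T))"
  have "((\<lambda>T. s / (2 * T)) has_real_derivative - s / (2 * T ^ 2)) (at T within A)"
    using T by (auto intro!: derivative_eq_intros simp: power2_eq_square)
  then have "((\<lambda>T. tanh (s / (2 * T)) / s) has_real_derivative
               (1 - tanh (s / (2 * T)) ^ 2) * (- s / (2 * T ^ 2)) / s) (at T within A)"
    by (intro DERIV_cdivide has_field_derivative_tanh) simp_all
  moreover have "(1 - t ^ 2) * (- s / (2 * T ^ 2)) / s = - (1 - t ^ 2) / (2 * T ^ 2)"
    using False T by (simp add: field_simps)
  ultimately show ?thesis
    using False by (simp add: tanh_kernel_eq tanh_kernel_dT_def t_def)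
qed

lemma tanh_kernel_dT_neg: "T > 0 \<Longrightarrow> tanh_kernel_dT T s < 0"
  using tanh_sq_less_1[of "s / (2 * T)"] by (simp add: tanh_kernel_dT_def divide_neg_pos)

lemma tanh_kernel_plus_dT_nonneg:
  assumes T: "T > 0" and s: "0 \<le> s"
  shows "0 \<le> tanh_kernel T s + T * tanh_kernel_dT T s"
    and "0 < s \<Longrightarrow> 0 < tanh_kernel T s + T * tanh_kernel_dT T s"
proof -
  define y where "y = s / (2 * T)"
  have eq: "tanh_kernel T s + T * tanh_kernel_dT T s = (tanhc y - (1 - tanh y ^ 2)) / (2 * T)"
    unfolding tanh_kernel_def tanh_kernel_dT_def y_def[symmetric]
    using T by (simp add: field_simps power2_eq_square)
  show "0 \<le> tanh_kernel T s + T * tanh_kernel_dT T s"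
    unfolding eq using one_minus_tanh_sq_le_tanhc(1)[of y] T s by (simp add: y_def)
  show "0 < tanh_kernel T s + T * tanh_kernel_dT T s" if "0 < s"
    unfolding eq using one_minus_tanh_sq_le_tanhc(2)[of y] T that by (simp add: y_def)
qed

section \<open>Finite and critical temperature\<close>

lemma has_real_derivative_parametric_integral:
  fixes f f' :: "real \<Rightarrow> real \<Rightarrow> real"
  assumes U: "open U" "convex U" "x \<in> U"
    and f: "\<And>x t. x \<in> U \<Longrightarrow> t \<in> {a..b} \<Longrightarrow> ((\<lambda>x. f x t) has_real_derivative f' x t) (at x)"
    and cont_f: "\<And>x. x \<in> U \<Longrightarrow> continuous_on {a..b} (f x)"
    and cont_f': "continuous_on (U \<times> {a..b}) (\<lambda>(x, t). f' x t)"
  shows "((\<lambda>x. integral {a..b} (f x)) has_real_derivative integral {a..b} (f' x)) (at x)"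
proof -
  have "((\<lambda>x. integral (cbox a b) (f x)) has_real_derivative integral (cbox a b) (f' x)) (at x within U)"
    by (rule leibniz_rule_field_derivative)
       (use U f cont_f' cont_f in \<open>auto simp: has_field_derivative_at_within integrable_continuous_interval\<close>)
  then show ?thesis using at_within_open[OF U(3,1)] by simp
qed

lemma integral_add_scaled:
  fixes f g :: "real \<Rightarrow> real"
  assumes "continuous_on {a..b} f" "continuous_on {a..b} g"
  shows "integral {a..b} f + c * integral {a..b} g = integral {a..b} (\<lambda>x. f x + c * g x)"
proof -
  have "f integrable_on {a..b}" "g integrable_on {a..b}"
    using assms by (simp_all add: integrable_continuous_interval)
  then show ?thesis using integral_add[OF _ integrable_on_mult_right, of f _ _ c] by simp
qed

lemma integral_le_length_mult:
  fixes f :: "real \<Rightarrow> real"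
  assumes "0 \<le> b" "continuous_on {0..b} f" "\<And>x. x \<in> {0..b} \<Longrightarrow> f x \<le> K"
  shows "integral {0..b} f \<le> b * K"
proof -
  have "integral {0..b} f \<le> integral {0..b} (\<lambda>_. K)"
    by (rule integral_le) (use assms in \<open>auto intro: integrable_continuous_interval\<close>)
  then show ?thesis using assms(1) by simp
qed

lemma has_real_derivative_scaled_ln_cosh:
  assumes f: "(f has_real_derivative f') (at x within A)" and T: "T \<noteq> 0"
  shows "((\<lambda>x. 2 * T * ln (cosh (f x / (2 * T)))) has_real_derivative tanh (f x / (2 * T)) * f')
           (at x within A)"
  using f T by (auto intro!: derivative_eq_intros simp: tanh_def)

lemma gap_integral_eq:
  assumes T: "T > 0" and D: "0 \<le> D" and mu: "0 < mu" "mu \<le> xm"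
  shows "2 * T * ln (cosh (sqrt (xm\<^sup>2 + D\<^sup>2) / (2 * T)) / cosh (sqrt (mu\<^sup>2 + D\<^sup>2) / (2 * T)))
           + mu * integral {0..mu} (\<lambda>\<xi>. tanh_kernel T (sqrt (\<xi>\<^sup>2 + D\<^sup>2)))
         = integral {0..xm} (\<lambda>\<xi>. max mu \<xi> * tanh_kernel T (sqrt (\<xi>\<^sup>2 + D\<^sup>2)))"
    (is "?lhs = integral _ ?f")
proof -
  define k where "k \<xi> = tanh_kernel T (sqrt (\<xi>\<^sup>2 + D\<^sup>2))" for \<xi>
  define G where "G \<xi> = 2 * T * ln (cosh (sqrt (\<xi>\<^sup>2 + D\<^sup>2) / (2 * T)))" for \<xi>
  have cont: "continuous_on A (\<lambda>\<xi>. c \<xi> * k \<xi>)" if "continuous_on A c" for A c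
    unfolding k_def using that T by (intro continuous_intros) auto
  have "(G has_real_derivative \<xi> * k \<xi>) (at \<xi> within {mu..xm})" if "\<xi> \<in> {mu..xm}" for \<xi>
    \<comment> \<open>on \<open>[\<mu>, \<xi>\<^sub>m]\<close> the weight is \<open>\<xi>\<close>, and \<open>\<xi> K\<^sub>T(r)\<close> integrates to the logarithm of cosh\<close>
  proof -
    have pos: "\<xi>\<^sup>2 + D\<^sup>2 > 0" using that mu by (auto simp: add_pos_nonneg)
    have "(G has_real_derivative tanh (sqrt (\<xi>\<^sup>2 + D\<^sup>2) / (2 * T)) * (\<xi> / sqrt (\<xi>\<^sup>2 + D\<^sup>2)))
            (at \<xi> within {mu..xm})"
      unfolding G_def[abs_def] using T
      by (intro has_real_derivative_scaled_ln_cosh has_real_derivative_sqrt_sum_sq pos) simp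
    moreover have "sqrt (\<xi>\<^sup>2 + D\<^sup>2) \<noteq> 0" using pos by (metis real_sqrt_gt_zero less_irrefl)
    ultimately show ?thesis by (simp add: k_def tanh_kernel_eq mult.commute)
  qed
  then have "((\<lambda>\<xi>. \<xi> * k \<xi>) has_integral G xm - G mu) {mu..xm}"
    by (intro fundamental_theorem_of_calculus[OF mu(2)])
       (simp add: has_real_derivative_iff_has_vector_derivative)
  then have right: "integral {mu..xm} ?f = G xm - G mu"
    by (subst integral_cong[where g = "\<lambda>\<xi>. \<xi> * k \<xi>"]) (auto simp: k_def intro: integral_unique)
  have "integral {0..mu} ?f = integral {0..mu} (\<lambda>\<xi>. mu * k \<xi>)"
    by (rule integral_cong) (auto simp: k_def)
  also have "\<dots> = mu * integral {0..mu} k"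
    using cont[of "{0..mu}" "\<lambda>_. 1"] by (simp add: integrable_continuous_interval)
  finally have left: "integral {0..mu} ?f = mu * integral {0..mu} k" .
  have "integral {0..mu} ?f + integral {mu..xm} ?f = integral {0..xm} ?f"
  proof (rule Henstock_Kurzweil_Integration.integral_combine)
    show "?f integrable_on {0..xm}"
      using cont[of "{0..xm}" "max mu"] by (simp add: k_def integrable_continuous_interval continuous_intros)
  qed (use mu in auto)
  moreover have "?lhs = G xm - G mu + mu * integral {0..mu} k"
    by (simp add: G_def k_def[abs_def] ln_divide_pos algebra_simps)
  ultimately show ?thesis using left right by simp
qed

lemma FT_eq_integral:
  assumes T: "T > 0" and D: "D > 0" and mu: "0 < mu" "mu \<le> xm"
  shows "FT xm mu T D = integral {0..xm} (\<lambda>\<xi>. max mu \<xi> * tanh_kernel T (sqrt (\<xi>\<^sup>2 + D\<^sup>2)))"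
proof -
  have "sqrt (\<xi>\<^sup>2 + D\<^sup>2) \<noteq> 0" for \<xi>
    using D by (metis add_nonneg_pos real_sqrt_gt_zero zero_less_power2 zero_le_power2 less_irrefl)
  then have "tanh (sqrt (\<xi>\<^sup>2 + D\<^sup>2) / (2 * T)) / sqrt (\<xi>\<^sup>2 + D\<^sup>2) = tanh_kernel T (sqrt (\<xi>\<^sup>2 + D\<^sup>2))"
    for \<xi> by (simp add: tanh_kernel_eq)
  then show ?thesis
    using gap_integral_eq[OF T less_imp_le[OF D] mu] by (simp add: FT_def)
qed

lemma GT_eq_integral:
  assumes T: "T > 0" and mu: "0 < mu" "mu \<le> xm"
  shows "GT xm mu T = integral {0..xm} (\<lambda>\<xi>. max mu \<xi> * tanh_kernel T \<xi>)"
proof -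
  have "integral {0..mu} (\<lambda>\<xi>. tanh_kernel T (sqrt (\<xi>\<^sup>2 + 0\<^sup>2)))
      = integral {0..mu} (\<lambda>\<xi>. 1 / \<xi> * tanh (\<xi> / (2 * T)))"
    by (rule integral_spike[where S = "{0}"]) (auto simp: tanh_kernel_eq)
  moreover have "integral {0..xm} (\<lambda>\<xi>. max mu \<xi> * tanh_kernel T (sqrt (\<xi>\<^sup>2 + 0\<^sup>2)))
      = integral {0..xm} (\<lambda>\<xi>. max mu \<xi> * tanh_kernel T \<xi>)"
    by (rule integral_cong) simp
  ultimately show ?thesis
    using gap_integral_eq[OF T order.refl mu] mu by (simp add: GT_def)
qed

definition FT_deriv :: "real \<Rightarrow> real \<Rightarrow> real \<Rightarrow> real \<Rightarrow> real" where
  "FT_deriv xm mu T D = integral {0..xm}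
     (\<lambda>\<xi>. max mu \<xi> * (D / sqrt (\<xi>\<^sup>2 + D\<^sup>2) * tanh_kernel_deriv T (sqrt (\<xi>\<^sup>2 + D\<^sup>2))))"

definition GT_deriv :: "real \<Rightarrow> real \<Rightarrow> real \<Rightarrow> real" where
  "GT_deriv xm mu T = integral {0..xm} (\<lambda>\<xi>. max mu \<xi> * tanh_kernel_dT T \<xi>)"

lemma FT_has_derivative:
  assumes T: "T > 0" and D: "D > 0" and mu: "0 < mu" "mu \<le> xm"
  shows "(FT xm mu T has_real_derivative FT_deriv xm mu T D) (at D)"
proof -
  have r: "\<xi>\<^sup>2 + x\<^sup>2 > 0" "sqrt (\<xi>\<^sup>2 + x\<^sup>2) > 0" if "x > 0" for x \<xi> :: real
    using that by (auto simp: add_nonneg_pos)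
  have "((\<lambda>D. integral {0..xm} (\<lambda>\<xi>. max mu \<xi> * tanh_kernel T (sqrt (\<xi>\<^sup>2 + D\<^sup>2))))
          has_real_derivative FT_deriv xm mu T D) (at D)"
    unfolding FT_deriv_def
  proof (rule has_real_derivative_parametric_integral[where U = "{0<..}"])
    fix x \<xi> :: real assume "x \<in> {0<..}"
    then have x: "x > 0" by simp
    have "((\<lambda>x. sqrt (\<xi>\<^sup>2 + x\<^sup>2)) has_real_derivative x / sqrt (\<xi>\<^sup>2 + x\<^sup>2)) (at x)"
      using has_real_derivative_sqrt_sum_sq[of x \<xi>] r[OF x] by (simp add: add.commute)
    from DERIV_chain2[OF gap_rhs.has_deriv[OF gap_rhs_tanh_kernel[OF T] r(2)[OF x]] this]
    show "((\<lambda>x. max mu \<xi> * tanh_kernel T (sqrt (\<xi>\<^sup>2 + x\<^sup>2))) has_real_derivative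
            max mu \<xi> * (x / sqrt (\<xi>\<^sup>2 + x\<^sup>2) * tanh_kernel_deriv T (sqrt (\<xi>\<^sup>2 + x\<^sup>2)))) (at x)"
      by (intro DERIV_cmult) (simp add: mult.commute)
  next
    show "continuous_on ({0<..} \<times> {0..xm}) (\<lambda>(x, \<xi>).
            max mu \<xi> * (x / sqrt (\<xi>\<^sup>2 + x\<^sup>2) * tanh_kernel_deriv T (sqrt (\<xi>\<^sup>2 + x\<^sup>2))))"
      unfolding tanh_kernel_deriv_def split_beta using T r
      by (intro continuous_intros) (auto simp: less_imp_neq[symmetric])
  qed (use T D in \<open>auto intro!: continuous_intros\<close>)
  then show ?thesis
    by (rule has_field_derivative_transform_within_open[where S = "{0<..}"])
       (use D FT_eq_integral[OF T _ mu] in auto)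
qed

lemma GT_has_derivative:
  assumes T: "T > 0" and mu: "0 < mu" "mu \<le> xm"
  shows "(GT xm mu has_real_derivative GT_deriv xm mu T) (at T)"
proof -
  have "((\<lambda>T. integral {0..xm} (\<lambda>\<xi>. max mu \<xi> * tanh_kernel T \<xi>)) has_real_derivative GT_deriv xm mu T) (at T)"
    unfolding GT_deriv_def
  proof (rule has_real_derivative_parametric_integral[where U = "{0<..}"])
    fix x \<xi> :: real assume "x \<in> {0<..}"
    then show "((\<lambda>x. max mu \<xi> * tanh_kernel x \<xi>) has_real_derivative max mu \<xi> * tanh_kernel_dT x \<xi>) (at x)"
      by (intro DERIV_cmult tanh_kernel_has_derivative_T) simp
  next
    show "continuous_on ({0<..} \<times> {0..xm}) (\<lambda>(x, \<xi>). max mu \<xi> * tanh_kernel_dT x \<xi>)"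
      unfolding tanh_kernel_dT_def split_beta
      by (intro continuous_intros) auto
  qed (use T in \<open>auto intro!: continuous_intros\<close>)
  then show ?thesis
    by (rule has_field_derivative_transform_within_open[where S = "{0<..}"])
       (use T GT_eq_integral[OF _ mu] in auto)
qed

lemma gap_rhs_FT:
  assumes T: "T > 0" and mu: "0 < mu" "mu \<le> xm"
  shows "gap_rhs (FT xm mu T) (FT_deriv xm mu T)"
proof
  interpret K: gap_rhs "tanh_kernel T" "tanh_kernel_deriv T" by (rule gap_rhs_tanh_kernel[OF T])
  fix D :: real assume D: "D > 0"
  show "(FT xm mu T has_real_derivative FT_deriv xm mu T D) (at D)"
    by (rule FT_has_derivative[OF T D mu])
  define r where "r \<xi> = sqrt (\<xi>\<^sup>2 + D\<^sup>2)" for \<xi>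
  define k where "k \<xi> = max mu \<xi> * tanh_kernel T (r \<xi>)" for \<xi>
  define k' where "k' \<xi> = max mu \<xi> * (D / r \<xi> * tanh_kernel_deriv T (r \<xi>))" for \<xi>
  have r: "r \<xi> > 0" "D \<le> r \<xi>" for \<xi>
    using D by (auto simp: r_def add_nonneg_pos intro: real_le_rsqrt)
  have cont: "continuous_on {0..xm} k" "continuous_on {0..xm} k'"
    unfolding k_def k'_def r_def tanh_kernel_deriv_def using T r(1)
    by (auto intro!: continuous_intros simp: r_def less_imp_neq[symmetric])
  have ne: "{0<..<xm} \<noteq> {}" using mu by auto
  have "integral {0..xm} k' < integral {0..xm} (\<lambda>_. 0)"
  proof (rule integral_less_real[OF cont(2) _ ne])
    fix \<xi> :: real
    have neg: "D / r \<xi> * tanh_kernel_deriv T (r \<xi>) < 0"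
      using mult_pos_neg[OF divide_pos_pos[OF D r(1)] K.deriv_neg[OF r(1)]] .
    show "k' \<xi> < 0" unfolding k'_def by (rule mult_pos_neg) (use mu neg in auto)
  qed simp
  then show "FT_deriv xm mu T D < 0" by (simp add: FT_deriv_def k'_def[abs_def] r_def)
  have "FT xm mu T D + D * FT_deriv xm mu T D = integral {0..xm} k + D * integral {0..xm} k'"
    by (simp add: FT_eq_integral[OF T D mu] FT_deriv_def k_def[abs_def] k'_def[abs_def] r_def)
  also have "\<dots> = integral {0..xm} (\<lambda>\<xi>. k \<xi> + D * k' \<xi>)"
    by (rule integral_add_scaled[OF cont])
  also have "integral {0..xm} (\<lambda>_. 0) < \<dots>"
  proof (rule integral_less_real[OF _ _ ne])
    fix \<xi> :: real
    have "0 < tanh_kernel T (r \<xi>) + D * (D / r \<xi>) * tanh_kernel_deriv T (r \<xi>)"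
      using tanh_kernel_plus_scaled_deriv_pos[OF T D r(2)] .
    moreover have "k \<xi> + D * k' \<xi>
        = max mu \<xi> * (tanh_kernel T (r \<xi>) + D * (D / r \<xi>) * tanh_kernel_deriv T (r \<xi>))"
      by (simp add: k_def k'_def algebra_simps)
    ultimately show "0 < k \<xi> + D * k' \<xi>" using mu by simp
  qed (use cont in \<open>auto intro!: continuous_intros\<close>)
  finally show "0 < FT xm mu T D + D * FT_deriv xm mu T D" by simp
qed

lemma gap_rhs_GT:
  assumes mu: "0 < mu" "mu \<le> xm"
  shows "gap_rhs (GT xm mu) (GT_deriv xm mu)"
proof
  fix T :: real assume T: "T > 0"
  show "(GT xm mu has_real_derivative GT_deriv xm mu T) (at T)"
    by (rule GT_has_derivative[OF T mu])
  define k where "k \<xi> = max mu \<xi> * tanh_kernel T \<xi>" for \<xi>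
  define k' where "k' \<xi> = max mu \<xi> * tanh_kernel_dT T \<xi>" for \<xi>
  have cont: "continuous_on {0..xm} k" "continuous_on {0..xm} k'"
    unfolding k_def k'_def tanh_kernel_dT_def using T by (auto intro!: continuous_intros)
  have ne: "{0<..<xm} \<noteq> {}" using mu by auto
  have "integral {0..xm} k' < integral {0..xm} (\<lambda>_. 0)"
    by (rule integral_less_real[OF cont(2) _ ne])
       (use mu tanh_kernel_dT_neg[OF T] in \<open>auto simp: k'_def mult_pos_neg\<close>)
  then show "GT_deriv xm mu T < 0" by (simp add: GT_deriv_def k'_def[abs_def])
  have "GT xm mu T + T * GT_deriv xm mu T = integral {0..xm} k + T * integral {0..xm} k'"
    by (simp add: GT_eq_integral[OF T mu] GT_deriv_def k_def[abs_def] k'_def[abs_def])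
  also have "\<dots> = integral {0..xm} (\<lambda>\<xi>. k \<xi> + T * k' \<xi>)"
    by (rule integral_add_scaled[OF cont])
  also have "integral {0..xm} (\<lambda>_. 0) < \<dots>"
  proof (rule integral_less_real[OF _ _ ne])
    fix \<xi> :: real assume "\<xi> \<in> {0<..<xm}"
    then have "0 < tanh_kernel T \<xi> + T * tanh_kernel_dT T \<xi>"
      using tanh_kernel_plus_dT_nonneg(2)[OF T] by simp
    moreover have "k \<xi> + T * k' \<xi> = max mu \<xi> * (tanh_kernel T \<xi> + T * tanh_kernel_dT T \<xi>)"
      by (simp add: k_def k'_def algebra_simps)
    ultimately show "0 < k \<xi> + T * k' \<xi>" using mu by simp
  qed (use cont in \<open>auto intro!: continuous_intros\<close>)
  finally show "0 < GT xm mu T + T * GT_deriv xm mu T" by simp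
qed

lemma tanh_kernel_le_inverse: "T > 0 \<Longrightarrow> s > 0 \<Longrightarrow> tanh_kernel T s \<le> 1 / s"
  using tanh_real_lt_1[of "s / (2 * T)"] by (simp add: tanh_kernel_eq divide_right_mono)

lemma FT_le:
  assumes T: "T > 0" and D: "D > 0" and mu: "0 < mu" "mu \<le> xm"
  shows "FT xm mu T D \<le> xm\<^sup>2 / D"
proof -
  have "FT xm mu T D \<le> xm * (xm * (1 / D))"
    unfolding FT_eq_integral[OF T D mu]
  proof (rule integral_le_length_mult)
    fix \<xi> assume \<xi>: "\<xi> \<in> {0..xm}"
    have r: "D \<le> sqrt (\<xi>\<^sup>2 + D\<^sup>2)" by (rule real_le_rsqrt) simp
    have "tanh_kernel T (sqrt (\<xi>\<^sup>2 + D\<^sup>2)) \<le> 1 / sqrt (\<xi>\<^sup>2 + D\<^sup>2)"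
      using D r by (intro tanh_kernel_le_inverse[OF T]) (simp add: add_nonneg_pos)
    also have "\<dots> \<le> 1 / D" using D r by (intro divide_left_mono) (auto intro!: mult_pos_pos add_nonneg_pos)
    finally have "tanh_kernel T (sqrt (\<xi>\<^sup>2 + D\<^sup>2)) \<le> 1 / D" .
    then show "max mu \<xi> * tanh_kernel T (sqrt (\<xi>\<^sup>2 + D\<^sup>2)) \<le> xm * (1 / D)"
      using \<xi> mu tanh_kernel_pos[OF T] by (intro mult_mono) (auto intro: less_imp_le)
  qed (use T mu in \<open>auto intro!: continuous_intros\<close>)
  then show ?thesis by (simp add: power2_eq_square)
qed

lemma GT_le:
  assumes T: "T > 0" and mu: "0 < mu" "mu \<le> xm"
  shows "GT xm mu T \<le> xm\<^sup>2 / (2 * T)"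
proof -
  have "GT xm mu T \<le> xm * (xm * (1 / (2 * T)))"
    unfolding GT_eq_integral[OF T mu]
  proof (rule integral_le_length_mult)
    fix \<xi> assume "\<xi> \<in> {0..xm}"
    then show "max mu \<xi> * tanh_kernel T \<xi> \<le> xm * (1 / (2 * T))"
      using mu tanh_kernel_le[OF T] tanh_kernel_pos[OF T] by (intro mult_mono) (auto intro: less_imp_le)
  qed (use T mu in \<open>auto intro!: continuous_intros\<close>)
  then show ?thesis by (simp add: power2_eq_square)
qed

lemma sqrt_sum_sq_le_add:
  fixes x a :: real
  assumes "0 \<le> x" "0 \<le> a"
  shows "sqrt (x\<^sup>2 + a\<^sup>2) \<le> x + a"
proof -
  have "sqrt (x\<^sup>2 + a\<^sup>2) \<le> sqrt ((x + a)\<^sup>2)"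
    using assms by (intro real_sqrt_le_mono) (simp add: power2_eq_square algebra_simps)
  then show ?thesis using assms by simp
qed

lemma FT_le_GT:
  assumes T: "T > 0" and D: "D > 0" and mu: "0 < mu" "mu \<le> xm"
  shows "FT xm mu T D \<le> GT xm mu T" and "GT xm mu T - FT xm mu T D \<le> xm\<^sup>2 * D / (4 * T ^ 2)"
proof -
  define k where "k \<xi> = tanh_kernel T \<xi> - tanh_kernel T (sqrt (\<xi>\<^sup>2 + D\<^sup>2))" for \<xi>
  have r: "\<xi> \<le> sqrt (\<xi>\<^sup>2 + D\<^sup>2)" "sqrt (\<xi>\<^sup>2 + D\<^sup>2) \<le> \<xi> + D" if "0 \<le> \<xi>" for \<xi>
  proof -
    show "\<xi> \<le> sqrt (\<xi>\<^sup>2 + D\<^sup>2)" by (rule real_le_rsqrt) simp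
    show "sqrt (\<xi>\<^sup>2 + D\<^sup>2) \<le> \<xi> + D" using sqrt_sum_sq_le_add[OF that] D by simp
  qed
  have k: "0 \<le> k \<xi>" "k \<xi> \<le> D / (4 * T ^ 2)" if "0 \<le> \<xi>" for \<xi>
  proof -
    show "0 \<le> k \<xi>" using tanh_kernel_antimono[OF T that r(1)[OF that]] by (simp add: k_def)
    have "k \<xi> \<le> (sqrt (\<xi>\<^sup>2 + D\<^sup>2) - \<xi>) / (4 * T ^ 2)"
      unfolding k_def by (rule tanh_kernel_diff_le[OF T that r(1)[OF that]])
    also have "\<dots> \<le> D / (4 * T ^ 2)" using r(2)[OF that] by (intro divide_right_mono) auto
    finally show "k \<xi> \<le> D / (4 * T ^ 2)" .
  qed
  have cont: "continuous_on {0..xm} (\<lambda>\<xi>. max mu \<xi> * tanh_kernel T \<xi>)"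
    "continuous_on {0..xm} (\<lambda>\<xi>. max mu \<xi> * tanh_kernel T (sqrt (\<xi>\<^sup>2 + D\<^sup>2)))"
    using T by (auto intro!: continuous_intros)
  have diff: "GT xm mu T - FT xm mu T D = integral {0..xm} (\<lambda>\<xi>. max mu \<xi> * k \<xi>)"
    using integral_diff[OF cont[THEN integrable_continuous_interval]]
    by (simp add: GT_eq_integral[OF T mu] FT_eq_integral[OF T D mu] k_def algebra_simps)
  have "0 \<le> integral {0..xm} (\<lambda>\<xi>. max mu \<xi> * k \<xi>)"
  proof (rule integral_nonneg)
    show "(\<lambda>\<xi>. max mu \<xi> * k \<xi>) integrable_on {0..xm}"
      unfolding k_def using T by (intro integrable_continuous_interval continuous_intros) auto
  qed (use mu k(1) in auto)
  then show "FT xm mu T D \<le> GT xm mu T" using diff by simp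
  have "integral {0..xm} (\<lambda>\<xi>. max mu \<xi> * k \<xi>) \<le> xm * (xm * (D / (4 * T ^ 2)))"
  proof (rule integral_le_length_mult)
    fix \<xi> assume "\<xi> \<in> {0..xm}"
    then show "max mu \<xi> * k \<xi> \<le> xm * (D / (4 * T ^ 2))"
      using mu k by (intro mult_mono) auto
  qed (use T mu in \<open>auto simp: k_def intro!: continuous_intros\<close>)
  then show "GT xm mu T - FT xm mu T D \<le> xm\<^sup>2 * D / (4 * T ^ 2)"
    using diff by (simp add: power2_eq_square)
qed

lemma GT_ge:
  assumes T: "T > 0" "2 * T \<le> mu" and mu: "0 < mu" "mu \<le> xm"
  shows "mu * tanh 1 * ln (mu / (2 * T)) \<le> GT xm mu T"
proof -
  define f where "f \<xi> = max mu \<xi> * tanh_kernel T \<xi>" for \<xi>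
  define c where "c = mu * tanh 1"
  have cont: "continuous_on {a..b} f" for a b unfolding f_def using T by (intro continuous_intros) auto
  have "((\<lambda>\<xi>. c * (1 / \<xi>)) has_integral c * ln mu - c * ln (2 * T)) {2 * T..mu}"
  proof (rule fundamental_theorem_of_calculus[OF T(2)])
    fix \<xi> assume "\<xi> \<in> {2 * T..mu}"
    then have "\<xi> > 0" using T by auto
    then show "((\<lambda>\<xi>. c * ln \<xi>) has_vector_derivative c * (1 / \<xi>)) (at \<xi> within {2 * T..mu})"
      by (auto intro!: derivative_eq_intros simp: has_real_derivative_iff_has_vector_derivative[symmetric])
  qed
  then have "c * ln mu - c * ln (2 * T) \<le> integral {2 * T..mu} f"
  proof (intro has_integral_le[OF _ integrable_integral])
    show "f integrable_on {2 * T..mu}" using cont by (rule integrable_continuous_interval)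
    fix \<xi> assume \<xi>: "\<xi> \<in> {2 * T..mu}"
    then have "\<xi> > 0" "1 \<le> \<xi> / (2 * T)" using T by auto
    then have "tanh 1 / \<xi> \<le> tanh (\<xi> / (2 * T)) / \<xi>" by (intro divide_right_mono) auto
    then have "mu * (tanh 1 / \<xi>) \<le> mu * (tanh (\<xi> / (2 * T)) / \<xi>)"
      using mu by (intro mult_left_mono) auto
    moreover have "max mu \<xi> = mu" using \<xi> by simp
    ultimately show "c * (1 / \<xi>) \<le> f \<xi>"
      using \<open>\<xi> > 0\<close> by (simp add: f_def c_def tanh_kernel_eq)
  qed
  also have "\<dots> \<le> integral {0..xm} f"
    using T mu cont tanh_kernel_pos[OF T(1)]
    by (intro integral_subset_le) (auto simp: f_def intro!: integrable_continuous_interval less_imp_le)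
  finally show ?thesis
    using T mu by (simp add: GT_eq_integral f_def[abs_def] c_def ln_div algebra_simps)
qed

lemma GT_root_exists:
  assumes K: "K > 0" and mu: "0 < mu" "mu \<le> xm"
  shows "\<exists>L>0. GT xm mu L = K"
proof -
  interpret gap_rhs "GT xm mu" "GT_deriv xm mu" by (rule gap_rhs_GT[OF mu])
  define a where "a = mu / 2 * exp (- K / (mu * tanh 1))"
  have a: "a > 0" "2 * a \<le> mu" using K mu by (auto simp: a_def)
  have "K \<le> GT xm mu a"
    using GT_ge[OF a mu] mu by (simp add: a_def ln_div)
  moreover have "GT xm mu (xm\<^sup>2 / (2 * K)) \<le> K"
    using GT_le[of "xm\<^sup>2 / (2 * K)" mu xm] K mu by simp
  ultimately show ?thesis using K mu a by (intro root_exists) auto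
qed

lemma Tc_root:
  assumes "xm > 0" "lam > 0" and mu: "0 < mu" "mu \<le> xm"
  shows "Tc xm lam mu > 0" and "GT xm mu (Tc xm lam mu) = xm / lam"
proof -
  interpret gap_rhs "GT xm mu" "GT_deriv xm mu" by (rule gap_rhs_GT[OF mu])
  obtain L where L: "L > 0" "GT xm mu L = xm / lam"
    using GT_root_exists[of "xm / lam"] assms by auto
  have "Tc xm lam mu = L"
    unfolding Tc_def by (rule the_equality) (use L pos_eq_imp_eq in auto)
  then show "Tc xm lam mu > 0" "GT xm mu (Tc xm lam mu) = xm / lam" using L by auto
qed

lemma less_GT_iff_less_Tc:
  assumes "xm > 0" "lam > 0" and mu: "0 < mu" "mu \<le> xm" and T: "T > 0"
  shows "xm / lam < GT xm mu T \<longleftrightarrow> T < Tc xm lam mu"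
proof -
  interpret gap_rhs "GT xm mu" "GT_deriv xm mu" by (rule gap_rhs_GT[OF mu])
  show ?thesis
    using Tc_root[OF assms(1-4)] strict_antimono[OF T, of "Tc xm lam mu"] strict_antimono[of "Tc xm lam mu" T]
    by (cases T "Tc xm lam mu" rule: linorder_cases) auto
qed

lemma FT_root_exists:
  assumes T: "T > 0" and K: "0 < K" "K < GT xm mu T" and mu: "0 < mu" "mu \<le> xm"
  shows "\<exists>L>0. FT xm mu T L = K"
proof -
  interpret gap_rhs "FT xm mu T" "FT_deriv xm mu T" by (rule gap_rhs_FT[OF T mu])
  define a where "a = (GT xm mu T - K) * (4 * T\<^sup>2) / xm\<^sup>2"
  have a: "a > 0" using K T mu by (simp add: a_def)
  have "xm\<^sup>2 * a / (4 * T ^ 2) = GT xm mu T - K" using T mu by (simp add: a_def)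
  then have "K \<le> FT xm mu T a" using FT_le_GT(2)[OF T a mu] by simp
  moreover have "FT xm mu T (xm\<^sup>2 / K) \<le> K"
    using FT_le[OF T _ mu, of "xm\<^sup>2 / K"] K mu by simp
  ultimately show ?thesis using K mu a by (intro root_exists) auto
qed

lemma FT_less_GT:
  assumes T: "T > 0" and D: "D > 0" and mu: "0 < mu" "mu \<le> xm"
  shows "FT xm mu T D < GT xm mu T"
proof -
  interpret gap_rhs "FT xm mu T" "FT_deriv xm mu T" by (rule gap_rhs_FT[OF T mu])
  show ?thesis
    using strict_antimono[of "D / 2" D] FT_le_GT(1)[OF T _ mu, of "D / 2"] D by simp
qed

lemma gap_iteration_finite_temperature:
  assumes xm: "xm > 0" and lam: "lam > 0" and mu: "0 < mu" "mu \<le> xm" and T: "T > 0"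
    and u0: "u 0 > 0" and rec: "\<And>n. u (Suc n) = lam / xm * u n * FT xm mu T (u n)"
  shows "(incseq u \<or> decseq u) \<and>
    (\<exists>L. u \<longlonglongrightarrow> L \<and> L \<ge> 0 \<and>
       (T < Tc xm lam mu \<longrightarrow> L > 0 \<and> (\<forall>D>0. xm / lam = FT xm mu T D \<longleftrightarrow> D = L) \<and>
            ((\<forall>n. u n \<noteq> L) \<longrightarrow> lin_conv u L)) \<and>
       (T \<ge> Tc xm lam mu \<longrightarrow> L = 0 \<and> \<not> (\<exists>D>0. xm / lam = FT xm mu T D)))"
proof -
  interpret gap_rhs "FT xm mu T" "FT_deriv xm mu T" by (rule gap_rhs_FT[OF T mu])
  have c: "lam / xm > 0" "1 / (lam / xm) = xm / lam" using xm lam by auto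
  show ?thesis
  proof (cases "T < Tc xm lam mu")
    case True
    then have "xm / lam < GT xm mu T" using less_GT_iff_less_Tc[OF xm lam mu T] by simp
    then obtain L where L: "L > 0" "FT xm mu T L = xm / lam"
      using FT_root_exists[OF T _ _ mu] xm lam by (meson divide_pos_pos)
    have "\<forall>D>0. xm / lam = FT xm mu T D \<longleftrightarrow> D = L" using pos_eq_imp_eq L by auto
    moreover have "(incseq u \<or> decseq u) \<and> u \<longlonglongrightarrow> L \<and> ((\<forall>n. u n \<noteq> L) \<longrightarrow> lin_conv u L)"
      by (rule iterate_converges_linearly[where c = "lam / xm"]) (use L c u0 rec in auto)
    ultimately show ?thesis using True L by auto
  next
    case False
    then have "GT xm mu T \<le> xm / lam" using less_GT_iff_less_Tc[OF xm lam mu T] by simp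
    then have below: "FT xm mu T D < xm / lam" if "D > 0" for D
      using FT_less_GT[OF T that mu] by simp
    have "decseq u \<and> u \<longlonglongrightarrow> 0"
      by (rule iterate_tends_to_zero) (use below c u0 rec in auto)
    then show ?thesis using False below by fastforce
  qed
qed

lemma gap_iteration_critical_temperature:
  assumes xm: "xm > 0" and lam: "lam > 0" and mu: "0 < mu" "mu \<le> xm"
    and \<tau>0: "\<tau> 0 > 0" and rec: "\<And>n. \<tau> (Suc n) = lam / xm * \<tau> n * GT xm mu (\<tau> n)"
  shows "(incseq \<tau> \<or> decseq \<tau>) \<and> \<tau> \<longlonglongrightarrow> Tc xm lam mu \<and>
    ((\<forall>n. \<tau> n \<noteq> Tc xm lam mu) \<longrightarrow> lin_conv \<tau> (Tc xm lam mu))"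
proof -
  interpret gap_rhs "GT xm mu" "GT_deriv xm mu" by (rule gap_rhs_GT[OF mu])
  show ?thesis
    by (rule iterate_converges_linearly[where c = "lam / xm"]) (use Tc_root[OF xm lam mu] xm lam \<tau>0 rec in auto)
qed

theorem theorem2:
  fixes xm lam mu :: real
  assumes "xm > 0" and "lam > 0" and "0 < mu" and "mu \<le> xm"
  shows
   "(\<forall>u :: nat \<Rightarrow> real. u 0 > 0 \<and> (\<forall>n. u (Suc n) = lam / xm * u n * F0 xm mu (u n)) \<longrightarrow>
       (incseq u \<or> decseq u) \<and>
       (\<exists>L. u \<longlonglongrightarrow> L \<and> L > 0 \<and> (\<forall>D>0. xm / lam = F0 xm mu D \<longleftrightarrow> D = L) \<and>
            ((\<forall>n. u n \<noteq> L) \<longrightarrow> lin_conv u L)))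
    \<and>
    (\<forall>T > 0. \<forall>u :: nat \<Rightarrow> real. u 0 > 0 \<and> (\<forall>n. u (Suc n) = lam / xm * u n * FT xm mu T (u n)) \<longrightarrow>
       (incseq u \<or> decseq u) \<and>
       (\<exists>L. u \<longlonglongrightarrow> L \<and> L \<ge> 0 \<and>
          (T < Tc xm lam mu \<longrightarrow> L > 0 \<and> (\<forall>D>0. xm / lam = FT xm mu T D \<longleftrightarrow> D = L) \<and>
               ((\<forall>n. u n \<noteq> L) \<longrightarrow> lin_conv u L)) \<and>
          (T \<ge> Tc xm lam mu \<longrightarrow> L = 0 \<and> \<not> (\<exists>D>0. xm / lam = FT xm mu T D))))
    \<and>
    (\<forall>\<tau> :: nat \<Rightarrow> real. \<tau> 0 > 0 \<and> (\<forall>n. \<tau> (Suc n) = lam / xm * \<tau> n * GT xm mu (\<tau> n)) \<longrightarrow>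
       (incseq \<tau> \<or> decseq \<tau>) \<and> \<tau> \<longlonglongrightarrow> Tc xm lam mu \<and>
       ((\<forall>n. \<tau> n \<noteq> Tc xm lam mu) \<longrightarrow> lin_conv \<tau> (Tc xm lam mu)))"
  using gap_iteration_zero_temperature[OF assms] gap_iteration_finite_temperature[OF assms]
    gap_iteration_critical_temperature[OF assms]
  by blast

end
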